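(* Suppose $\theta_t=\theta$ for all $t$ (a constant) and $\mathbb{S}_\theta=\{\theta\in\mathbb{R}^{d_\theta}:[\theta]_k\ge0\ \forall k,\ \sum_{k=1}^{d_\theta}[\theta]_k=1\}$. Then the system $x_{t+1}=A_t(\theta)x_t+B_t(\theta)u_t$ is time-invariant SMP in each of the following cases. (i) ($v_t$ i.i.d.) $v_t(\theta)=v_t$ is i.i.d. with respect to $t$ and independent of $\theta$: it is TI SMP with $N=1$, $\phi(\theta)=1$, $M^{(1)}=\mathrm{E}[v_tv_t^\top]$. (ii) (deterministic polytope) $v_t(\theta)=\sum_{k=1}^{d_\theta}[\theta]_kv^{(k)}$ with deterministic vectors $v^{(k)}\in\mathbb{R}^{n(n+m)}$, and the conditional expectation $\mathrm{E}[v_tv_t^\top|\theta]$ is taken as the deterministic value $v_tv_t^\top$: it is TI SMP with $N=d_\theta^2$, $\phi(\theta)=\mathrm{vec}(\theta\theta^\top)$, $M^{(d_\theta(k'-1)+k)}=\tfrac12\big(v^{(k)}v^{(k')\top}+v^{(k')}v^{(k)\top}\big)$ for $k,k'\in\{1,\dots,d_\theta\}$. (iii) (random polytope) $v_t(\theta)=\sum_{k=1}^{d_\theta}[\theta]_kv_t^{(k)}$ where the random vertices $v_t^{(k)}$ are i.i.d. with respect to $t$ and independent of $\theta$: it is TI SMP with $N=d_\theta^2$, $\phi(\theta)=\mathrm{vec}(\theta\theta^\top)$, $M^{(d_\theta(k'-1)+k)}=\tfrac12\mathrm{E}\big[v_t^{(k)}v_t^{(k')\top}+v_t^{(k')}v_t^{(k)\top}\big]$.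 (iv) (uncertain mean and covariance) $\mathrm{E}[v_t(\theta)|\theta]=\sum_{k=1}^{d_\theta}[\theta]_k\mu^{(k)}$ and $\mathrm{Cov}[v_t(\theta)|\theta]=\sum_{k=1}^{d_\theta}[\theta]_k\Sigma^{(k)}$ with deterministic $\mu^{(k)}\in\mathbb{R}^{n(n+m)}$ and symmetric $\Sigma^{(k)}$: it is TI SMP with $N=d_\theta^2$, $\phi(\theta)=\mathrm{vec}(\theta\theta^\top)$, $M^{(d_\theta(k'-1)+k)}=\tfrac12\big(\mu^{(k)}\mu^{(k')\top}+\mu^{(k')}\mu^{(k)\top}\big)+\Sigma^{(k)}$.
   Context: System $x_{t+1}=A_t(\theta_t)x_t+B_t(\theta_t)u_t$ with $x_t\in\mathbb{R}^n$, $u_t\in\mathbb{R}^m$, uncertain $\theta_t\in\mathbb{S}_\theta\subset\mathbb{R}^{d_\theta}$, and random $v_t(\theta_t):=\mathrm{vec}([A_t(\theta_t),B_t(\theta_t)])\in\mathbb{R}^{n(n+m)}$ ($\mathrm{vec}$ stacks columns), distributed according to a conditional density $p(v_t\mid\theta_t)$ independently over $t$; $\mathrm{E}[\cdot|\theta]$ and $\mathrm{Cov}[\cdot|\theta]$ are conditional expectation/covariance given the parameter sequence. $\mathbb{P}_N:=\{\varphi\in\mathbb{R}^N:\varphi_k\ge0,\sum\varphi_k=1\}$. The system is second moment polytopic (SMP) if there exist a positive integer $N$, symmetric $M^{(1)},\dots,M^{(N)}\in\mathbb{R}^{n(n+m)\times n(n+m)}$ and a map $\phi:\mathbb{S}_\theta\to\mathbb{P}_N$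 with $\mathrm{E}[v_t(\theta_t)v_t(\theta_t)^\top|\theta_\bullet]=\sum_{k=1}^N[\phi(\theta_t)]_kM^{(k)}$ for all $t$ and all parameter sequences; it is time-invariant (TI) SMP if moreover $\theta_t=\theta$ is constant. *)

theory Defs
  imports "HOL-Probability.Probability"
begin

text \<open>Vectors in R^p are functions nat \<Rightarrow> real, only indices < p are
meaningful (0-based). Matrices are nat \<Rightarrow> nat \<Rightarrow> real (row, column).
A family of N matrices is nat \<Rightarrow> nat \<Rightarrow> nat \<Rightarrow> real.\<close>

text \<open>Standard std_simplex in R^p (S_theta for p = d_theta, P_N for p = N);
entries outside the index range are required to be 0 (canonical representative).\<close>
definition std_simplex :: "nat \<Rightarrow> (nat \<Rightarrow> real) set" where
  "std_simplex p = {x. (\<forall>k<p. 0 \<le> x k) \<and> (\<Sum>k<p. x k) = 1 \<and> (\<forall>k\<ge>p. x k = 0)}"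

text \<open>vec([A, B]) for A (n x n), B (n x m): stacking columns of the n x (n+m) matrix.
0-based index i + n*j corresponds to entry (i, j).\<close>
definition vecAB :: "nat \<Rightarrow> nat \<Rightarrow> (nat \<Rightarrow> nat \<Rightarrow> real) \<Rightarrow> (nat \<Rightarrow> nat \<Rightarrow> real) \<Rightarrow> nat \<Rightarrow> real" where
  "vecAB n m A B = (\<lambda>idx. if idx < n * (n + m) then
      (if idx div n < n then A (idx mod n) (idx div n) else B (idx mod n) (idx div n - n))
     else 0)"

definition sysvec :: "nat \<Rightarrow> nat \<Rightarrow> (nat \<Rightarrow> (nat \<Rightarrow> real) \<Rightarrow> 'w \<Rightarrow> nat \<Rightarrow> nat \<Rightarrow> real)
    \<Rightarrow> (nat \<Rightarrow> (nat \<Rightarrow> real) \<Rightarrow> 'w \<Rightarrow> nat \<Rightarrow> nat \<Rightarrow> real) \<Rightarrow> nat \<Rightarrow> (nat \<Rightarrow> real) \<Rightarrow> 'w \<Rightarrow> nat \<Rightarrow> real" where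
  "sysvec n m A B = (\<lambda>t \<theta> \<omega>. vecAB n m (A t \<theta> \<omega>) (B t \<theta> \<omega>))"

definition vecM :: "nat \<Rightarrow> (nat \<Rightarrow> real) measure" where
  "vecM p = PiM {..<p} (\<lambda>_. borel)"

definition rv :: "nat \<Rightarrow> ('w \<Rightarrow> nat \<Rightarrow> real) \<Rightarrow> 'w \<Rightarrow> nat \<Rightarrow> real" where
  "rv p X = (\<lambda>\<omega>. restrict (X \<omega>) {..<p})"

definition iid :: "'w measure \<Rightarrow> 'b measure \<Rightarrow> (nat \<Rightarrow> 'w \<Rightarrow> 'b) \<Rightarrow> bool" where
  "iid M N X \<longleftrightarrow> prob_space.indep_vars M (\<lambda>_. N) X UNIV \<and>
     (\<forall>t. distr M N (X t) = distr M N (X 0))"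

text \<open>vec(theta theta^T): 0-based index d*k' + k holds theta_k * theta_k'.\<close>
definition vec_outer :: "nat \<Rightarrow> (nat \<Rightarrow> real) \<Rightarrow> nat \<Rightarrow> real" where
  "vec_outer d \<theta> = (\<lambda>i. if i < d * d then \<theta> (i mod d) * \<theta> (i div d) else 0)"

text \<open>Time-invariant SMP with the given data N, phi, M^(1..N) (0-based indices k < N):
for every constant parameter theta in S_theta and every t,
E[v_t v_t^T | theta] = sum_k phi(theta)_k M^(k) (second moments existing).\<close>
definition TI_SMP_with :: "'w measure \<Rightarrow> nat \<Rightarrow> nat \<Rightarrow> (nat \<Rightarrow> (nat \<Rightarrow> real) \<Rightarrow> 'w \<Rightarrow> nat \<Rightarrow> real)
    \<Rightarrow> nat \<Rightarrow> ((nat \<Rightarrow> real) \<Rightarrow> nat \<Rightarrow> real) \<Rightarrow> (nat \<Rightarrow> nat \<Rightarrow> nat \<Rightarrow> real) \<Rightarrow> bool" where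
  "TI_SMP_with M D d v N \<phi> Ms \<longleftrightarrow>
     0 < N \<and>
     (\<forall>k<N. \<forall>i<D. \<forall>j<D. Ms k i j = Ms k j i) \<and>
     (\<forall>\<theta>\<in>std_simplex d. \<phi> \<theta> \<in> std_simplex N) \<and>
     (\<forall>t. \<forall>\<theta>\<in>std_simplex d. \<forall>i<D. \<forall>j<D.
        integrable M (\<lambda>\<omega>. v t \<theta> \<omega> i * v t \<theta> \<omega> j) \<and>
        (\<integral>\<omega>. v t \<theta> \<omega> i * v t \<theta> \<omega> j \<partial>M) = (\<Sum>k<N. \<phi> \<theta> k * Ms k i j))"

definition TI_SMP :: "'w measure \<Rightarrow> nat \<Rightarrow> nat \<Rightarrow> (nat \<Rightarrow> (nat \<Rightarrow> real) \<Rightarrow> 'w \<Rightarrow> nat \<Rightarrow> real) \<Rightarrow> bool" where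
  "TI_SMP M D d v \<longleftrightarrow> (\<exists>N \<phi> Ms. TI_SMP_with M D d v N \<phi> Ms)"

end

theory Submission
  imports Defs
begin

text \<open>In cases (ii)--(iv) the second moment is, entrywise, a quadratic form in \<open>\<theta>\<close>:
\<open>E[v\<^sub>i v\<^sub>j] = (\<Sum>k k'. \<theta>\<^sub>k \<theta>\<^sub>k' F\<^sub>k\<^sub>k'(i,j))\<close>. Symmetrising \<open>F\<close> in \<open>(k,k')\<close> leaves this
form unchanged and turns it into a combination of symmetric matrices weighted by the entries
of \<open>vec(\<theta>\<theta>\<^sup>T)\<close>, which lie in the simplex whenever \<open>\<theta>\<close> does. In case (iv) the affine
covariance term becomes quadratic because \<open>\<Sum>\<theta>\<^sub>k = 1\<close>, and
\<open>E[v\<^sub>i v\<^sub>j] = Cov + E v\<^sub>i E v\<^sub>j\<close>. In cases (i) and (iii) the i.i.d. hypothesis reduces the moments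
at time \<open>t\<close> to those at time \<open>0\<close>.\<close>

lemma sum_lessThan_mult_divmod:
  fixes g :: "nat \<Rightarrow> nat \<Rightarrow> 'a::comm_monoid_add"
  shows "(\<Sum>idx<d * e. g (idx mod d) (idx div d)) = (\<Sum>k<d. \<Sum>k'<e. g k k')"
proof -
  have bound: "k + d * k' < d * e" if "k < d" "k' < e" for k k'
  proof -
    have "k + d * k' < d * Suc k'" using \<open>k < d\<close> by simp
    also have "\<dots> \<le> d * e" using \<open>k' < e\<close> by (intro mult_le_mono2) simp
    finally show ?thesis .
  qed
  have divmod: "idx mod d < d" "idx div d < e" if "idx < d * e" for idx
  proof -
    have "0 < d" using that by (cases d) auto
    with that show "idx mod d < d" "idx div d < e"
      by (simp_all add: div_less_iff_less_mult mult.commute)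
  qed
  have "(\<Sum>idx<d * e. g (idx mod d) (idx div d)) = (\<Sum>(k, k')\<in>{..<d} \<times> {..<e}. g k k')"
    by (rule sum.reindex_bij_witness[where i = "\<lambda>(k, k'). k + d * k'" and j = "\<lambda>idx. (idx mod d, idx div d)"])
      (auto simp: bound divmod)
  also have "\<dots> = (\<Sum>k<d. \<Sum>k'<e. g k k')"
    by (simp add: sum.cartesian_product)
  finally show ?thesis .
qed

lemma vec_outer_in_std_simplex:
  assumes "\<theta> \<in> std_simplex d"
  shows "vec_outer d \<theta> \<in> std_simplex (d\<^sup>2)"
proof -
  have nonneg: "\<forall>k<d. 0 \<le> \<theta> k" and sum_one: "(\<Sum>k<d. \<theta> k) = 1"
    using assms by (auto simp: std_simplex_def)
  have "(\<Sum>idx<d\<^sup>2. vec_outer d \<theta> idx) = (\<Sum>idx<d * d. \<theta> (idx mod d) * \<theta> (idx div d))"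
    by (simp add: vec_outer_def power2_eq_square)
  also have "\<dots> = (\<Sum>k<d. \<theta> k) * (\<Sum>k'<d. \<theta> k')"
    using sum_lessThan_mult_divmod[of "\<lambda>k k'. \<theta> k * \<theta> k'" d d] by (simp add: sum_product)
  finally have "(\<Sum>idx<d\<^sup>2. vec_outer d \<theta> idx) = 1"
    using sum_one by simp
  moreover have "0 \<le> vec_outer d \<theta> idx" for idx
    using nonneg by (cases "d = 0") (auto simp: vec_outer_def div_less_iff_less_mult)
  moreover have "vec_outer d \<theta> idx = 0" if "d\<^sup>2 \<le> idx" for idx
    using that by (simp add: vec_outer_def power2_eq_square)
  ultimately show ?thesis
    by (simp add: std_simplex_def)
qed

lemma sum_vec_outer:
  "(\<Sum>idx<d\<^sup>2. vec_outer d \<theta> idx * f (idx mod d) (idx div d))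
     = (\<Sum>k<d. \<Sum>k'<d. \<theta> k * \<theta> k' * f k k')"
  using sum_lessThan_mult_divmod[of "\<lambda>k k'. \<theta> k * \<theta> k' * f k k'" d d]
  by (simp add: vec_outer_def power2_eq_square)

lemma sum_sum_symmetrize:
  fixes \<theta> :: "'a \<Rightarrow> real"
  shows "(\<Sum>k\<in>A. \<Sum>k'\<in>A. \<theta> k * \<theta> k' * ((g k k' + g k' k) / 2))
     = (\<Sum>k\<in>A. \<Sum>k'\<in>A. \<theta> k * \<theta> k' * g k k')"
proof -
  have "(\<Sum>k\<in>A. \<Sum>k'\<in>A. \<theta> k * \<theta> k' * g k' k) = (\<Sum>k\<in>A. \<Sum>k'\<in>A. \<theta> k * \<theta> k' * g k k')"
    by (subst sum.swap) (simp add: mult.commute)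
  then show ?thesis
    by (simp add: add_divide_distrib distrib_left sum.distrib sum_divide_distrib[symmetric])
qed

lemma sum_sum_mult_collapse:
  fixes \<theta> :: "'a \<Rightarrow> real"
  assumes "(\<Sum>k'\<in>A. \<theta> k') = 1"
  shows "(\<Sum>k\<in>A. \<Sum>k'\<in>A. \<theta> k * \<theta> k' * g k) = (\<Sum>k\<in>A. \<theta> k * g k)"
  using assms by (simp add: sum_distrib_left[symmetric] sum_distrib_right[symmetric] mult.commute mult.left_commute)

lemma TI_SMP_with_vec_outerI:
  fixes F :: "nat \<Rightarrow> nat \<Rightarrow> nat \<Rightarrow> nat \<Rightarrow> real"
  assumes "0 < d"
    and symmetric: "\<And>k k' i j. k < d \<Longrightarrow> k' < d \<Longrightarrow> i < D \<Longrightarrow> j < D \<Longrightarrow> F k k' i j = F k k' j i"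
    and moments: "\<And>t \<theta> i j. \<theta> \<in> std_simplex d \<Longrightarrow> i < D \<Longrightarrow> j < D \<Longrightarrow>
        integrable M (\<lambda>\<omega>. v t \<theta> \<omega> i * v t \<theta> \<omega> j) \<and>
        (\<integral>\<omega>. v t \<theta> \<omega> i * v t \<theta> \<omega> j \<partial>M) = (\<Sum>k<d. \<Sum>k'<d. \<theta> k * \<theta> k' * F k k' i j)"
  shows "TI_SMP_with M D d v (d\<^sup>2) (vec_outer d) (\<lambda>idx. F (idx mod d) (idx div d))"
proof -
  have "idx mod d < d" "idx div d < d" if "idx < d\<^sup>2" for idx
    using that \<open>0 < d\<close> by (auto simp: power2_eq_square div_less_iff_less_mult)
  moreover have "(\<integral>\<omega>. v t \<theta> \<omega> i * v t \<theta> \<omega> j \<partial>M)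
      = (\<Sum>idx<d\<^sup>2. vec_outer d \<theta> idx * F (idx mod d) (idx div d) i j)"
    if "\<theta> \<in> std_simplex d" "i < D" "j < D" for t \<theta> i j
    using moments[OF that] sum_vec_outer[of d \<theta> "\<lambda>k k'. F k k' i j"] by simp
  ultimately show ?thesis
    unfolding TI_SMP_with_def
    using \<open>0 < d\<close> symmetric moments vec_outer_in_std_simplex by auto
qed

lemma measurable_vecM_component: "i < p \<Longrightarrow> (\<lambda>x. x i) \<in> borel_measurable (vecM p)"
  unfolding vecM_def by (rule measurable_component_singleton) simp

lemma iid_integral_comp_eq:
  assumes "prob_space M" and "iid M N X" and f: "f \<in> borel_measurable N"
    and "integrable M (\<lambda>\<omega>. f (X 0 \<omega>) :: real)"
  shows "integrable M (\<lambda>\<omega>. f (X t \<omega>))" "(\<integral>\<omega>. f (X t \<omega>) \<partial>M) = (\<integral>\<omega>. f (X 0 \<omega>) \<partial>M)"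
proof -
  have X: "X s \<in> measurable M N" for s
    using assms(1,2) by (simp add: iid_def prob_space.indep_vars_def2)
  have "distr M N (X t) = distr M N (X 0)"
    using assms(2) by (simp add: iid_def)
  then show "integrable M (\<lambda>\<omega>. f (X t \<omega>))" "(\<integral>\<omega>. f (X t \<omega>) \<partial>M) = (\<integral>\<omega>. f (X 0 \<omega>) \<partial>M)"
    using assms(4) integrable_distr_eq[OF X f] integral_distr[OF X f] by metis+
qed

lemma (in prob_space) integral_mult_eq_covariance_add:
  fixes X Y :: "'a \<Rightarrow> real"
  assumes "integrable M X" "integrable M Y" "integrable M (\<lambda>\<omega>. X \<omega> * Y \<omega>)"
  shows "(\<integral>\<omega>. X \<omega> * Y \<omega> \<partial>M)
    = (\<integral>\<omega>. (X \<omega> - expectation X) * (Y \<omega> - expectation Y) \<partial>M) + expectation X * expectation Y"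
proof -
  have "(\<lambda>\<omega>. (X \<omega> - expectation X) * (Y \<omega> - expectation Y))
      = (\<lambda>\<omega>. (X \<omega> * Y \<omega> - expectation X * Y \<omega>) - (expectation Y * X \<omega> - expectation X * expectation Y))"
    by (rule ext) (simp add: algebra_simps)
  then show ?thesis
    using assms by (simp add: prob_space)
qed

lemma integral_sum_sum_mult:
  fixes f :: "'i \<Rightarrow> 'i \<Rightarrow> 'a \<Rightarrow> real"
  assumes "\<And>k k'. k \<in> A \<Longrightarrow> k' \<in> A \<Longrightarrow> integrable M (f k k')"
  shows "(\<integral>\<omega>. (\<Sum>k\<in>A. \<Sum>k'\<in>A. c k k' * f k k' \<omega>) \<partial>M)
    = (\<Sum>k\<in>A. \<Sum>k'\<in>A. c k k' * integral\<^sup>L M (f k k'))"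
proof -
  have "(\<integral>\<omega>. (\<Sum>k\<in>A. \<Sum>k'\<in>A. c k k' * f k k' \<omega>) \<partial>M)
      = (\<Sum>k\<in>A. \<integral>\<omega>. (\<Sum>k'\<in>A. c k k' * f k k' \<omega>) \<partial>M)"
    using assms by (intro Bochner_Integration.integral_sum Bochner_Integration.integrable_sum
        integrable_mult_right) auto
  also have "\<dots> = (\<Sum>k\<in>A. \<Sum>k'\<in>A. \<integral>\<omega>. c k k' * f k k' \<omega> \<partial>M)"
    using assms by (intro sum.cong refl Bochner_Integration.integral_sum integrable_mult_right) auto
  finally show ?thesis
    by simp
qed

lemma TI_SMP_with_iid:
  fixes v :: "nat \<Rightarrow> (nat \<Rightarrow> real) \<Rightarrow> 'w \<Rightarrow> nat \<Rightarrow> real" and w :: "nat \<Rightarrow> 'w \<Rightarrow> nat \<Rightarrow> real"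
  assumes M: "prob_space M"
    and v_eq: "\<forall>t. \<forall>\<theta>\<in>std_simplex d. \<forall>\<omega>\<in>space M. \<forall>i<D. v t \<theta> \<omega> i = w t \<omega> i"
    and iid: "iid M (vecM D) (\<lambda>t. rv D (w t))"
    and integrable_0: "\<forall>i<D. \<forall>j<D. integrable M (\<lambda>\<omega>. w 0 \<omega> i * w 0 \<omega> j)"
  shows "TI_SMP_with M D d v 1 (\<lambda>\<theta> k. if k = 0 then 1 else 0)
           (\<lambda>k i j. \<integral>\<omega>. w 0 \<omega> i * w 0 \<omega> j \<partial>M)"
proof -
  have "integrable M (\<lambda>\<omega>. v t \<theta> \<omega> i * v t \<theta> \<omega> j) \<and>
      (\<integral>\<omega>. v t \<theta> \<omega> i * v t \<theta> \<omega> j \<partial>M) = (\<integral>\<omega>. w 0 \<omega> i * w 0 \<omega> j \<partial>M)"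
    if "\<theta> \<in> std_simplex d" "i < D" "j < D" for t \<theta> i j
  proof -
    have f: "(\<lambda>x. x i * x j) \<in> borel_measurable (vecM D)"
      using that by (intro borel_measurable_times measurable_vecM_component)
    have "rv D (w s) \<omega> i * rv D (w s) \<omega> j = w s \<omega> i * w s \<omega> j" for s \<omega>
      using that by (simp add: rv_def)
    then have "integrable M (\<lambda>\<omega>. w t \<omega> i * w t \<omega> j)"
      "(\<integral>\<omega>. w t \<omega> i * w t \<omega> j \<partial>M) = (\<integral>\<omega>. w 0 \<omega> i * w 0 \<omega> j \<partial>M)"
      using iid_integral_comp_eq[OF M iid f, of t] integrable_0 that by auto
    moreover have "v t \<theta> \<omega> i * v t \<theta> \<omega> j = w t \<omega> i * w t \<omega> j" if "\<omega> \<in> space M" for \<omega>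
      using v_eq \<open>\<theta> \<in> std_simplex d\<close> \<open>i < D\<close> \<open>j < D\<close> that by simp
    ultimately show ?thesis
      by (simp cong: Bochner_Integration.integrable_cong Bochner_Integration.integral_cong)
  qed
  then show ?thesis
    unfolding TI_SMP_with_def by (auto simp: std_simplex_def mult.commute)
qed

lemma TI_SMP_with_deterministic_polytope:
  fixes v :: "nat \<Rightarrow> (nat \<Rightarrow> real) \<Rightarrow> 'w \<Rightarrow> nat \<Rightarrow> real" and vk :: "nat \<Rightarrow> nat \<Rightarrow> real"
  assumes M: "prob_space M" and "0 < d"
    and v_eq: "\<forall>t. \<forall>\<theta>\<in>std_simplex d. \<forall>\<omega>\<in>space M. \<forall>i<D. v t \<theta> \<omega> i = (\<Sum>k<d. \<theta> k * vk k i)"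
  shows "TI_SMP_with M D d v (d\<^sup>2) (vec_outer d)
           (\<lambda>idx i j. (vk (idx mod d) i * vk (idx div d) j + vk (idx div d) i * vk (idx mod d) j) / 2)"
proof (rule TI_SMP_with_vec_outerI[where F = "\<lambda>k k' i j. (vk k i * vk k' j + vk k' i * vk k j) / 2"])
  interpret prob_space M by (rule M)
  fix t \<theta> i j
  assume "\<theta> \<in> std_simplex d" "i < D" "j < D"
  then have "v t \<theta> \<omega> i * v t \<theta> \<omega> j = (\<Sum>k<d. \<Sum>k'<d. \<theta> k * \<theta> k' * (vk k i * vk k' j))"
    if "\<omega> \<in> space M" for \<omega>
    using v_eq that by (simp add: sum_product algebra_simps)
  then show "integrable M (\<lambda>\<omega>. v t \<theta> \<omega> i * v t \<theta> \<omega> j) \<and>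
      (\<integral>\<omega>. v t \<theta> \<omega> i * v t \<theta> \<omega> j \<partial>M)
        = (\<Sum>k<d. \<Sum>k'<d. \<theta> k * \<theta> k' * ((vk k i * vk k' j + vk k' i * vk k j) / 2))"
    using sum_sum_symmetrize[of \<theta> "\<lambda>k k'. vk k i * vk k' j"]
    by (simp add: prob_space cong: Bochner_Integration.integrable_cong Bochner_Integration.integral_cong)
qed (auto simp: \<open>0 < d\<close> mult.commute)

lemma iid_vertex_products:
  fixes V :: "nat \<Rightarrow> nat \<Rightarrow> 'w \<Rightarrow> nat \<Rightarrow> real"
  assumes M: "prob_space M"
    and iid: "iid M (PiM {..<d} (\<lambda>_. vecM D)) (\<lambda>t \<omega>. restrict (\<lambda>k. rv D (V t k) \<omega>) {..<d})"
    and "k < d" "k' < d" "i < D" "j < D"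
    and "integrable M (\<lambda>\<omega>. V 0 k \<omega> i * V 0 k' \<omega> j)"
  shows "integrable M (\<lambda>\<omega>. V t k \<omega> i * V t k' \<omega> j)"
    "(\<integral>\<omega>. V t k \<omega> i * V t k' \<omega> j \<partial>M) = (\<integral>\<omega>. V 0 k \<omega> i * V 0 k' \<omega> j \<partial>M)"
proof -
  have "(\<lambda>x. x a b) \<in> borel_measurable (PiM {..<d} (\<lambda>_. vecM D))" if "a < d" "b < D" for a b
    using measurable_compose[OF measurable_component_singleton[of a "{..<d}" "\<lambda>_. vecM D"]
        measurable_vecM_component[of b D]] that by simp
  then have "(\<lambda>x. x k i * x k' j) \<in> borel_measurable (PiM {..<d} (\<lambda>_. vecM D))"
    using assms by (intro borel_measurable_times) auto
  then show "integrable M (\<lambda>\<omega>. V t k \<omega> i * V t k' \<omega> j)"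
    "(\<integral>\<omega>. V t k \<omega> i * V t k' \<omega> j \<partial>M) = (\<integral>\<omega>. V 0 k \<omega> i * V 0 k' \<omega> j \<partial>M)"
    using iid_integral_comp_eq[OF M iid, of "\<lambda>x. x k i * x k' j" t] assms
    by (simp_all add: rv_def)
qed

lemma TI_SMP_with_random_polytope:
  fixes v :: "nat \<Rightarrow> (nat \<Rightarrow> real) \<Rightarrow> 'w \<Rightarrow> nat \<Rightarrow> real" and V :: "nat \<Rightarrow> nat \<Rightarrow> 'w \<Rightarrow> nat \<Rightarrow> real"
  assumes M: "prob_space M" and "0 < d"
    and v_eq: "\<forall>t. \<forall>\<theta>\<in>std_simplex d. \<forall>\<omega>\<in>space M. \<forall>i<D. v t \<theta> \<omega> i = (\<Sum>k<d. \<theta> k * V t k \<omega> i)"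
    and iid: "iid M (PiM {..<d} (\<lambda>_. vecM D)) (\<lambda>t \<omega>. restrict (\<lambda>k. rv D (V t k) \<omega>) {..<d})"
    and integrable_0: "\<forall>k<d. \<forall>k'<d. \<forall>i<D. \<forall>j<D. integrable M (\<lambda>\<omega>. V 0 k \<omega> i * V 0 k' \<omega> j)"
  shows "TI_SMP_with M D d v (d\<^sup>2) (vec_outer d)
           (\<lambda>idx i j. (\<integral>\<omega>. V 0 (idx mod d) \<omega> i * V 0 (idx div d) \<omega> j
                          + V 0 (idx div d) \<omega> i * V 0 (idx mod d) \<omega> j \<partial>M) / 2)"
proof (rule TI_SMP_with_vec_outerI[where F = "\<lambda>k k' i j.
    (\<integral>\<omega>. V 0 k \<omega> i * V 0 k' \<omega> j + V 0 k' \<omega> i * V 0 k \<omega> j \<partial>M) / 2"])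
  show "0 < d" by fact
next
  fix k k' i j :: nat
  show "(\<integral>\<omega>. V 0 k \<omega> i * V 0 k' \<omega> j + V 0 k' \<omega> i * V 0 k \<omega> j \<partial>M) / 2
      = (\<integral>\<omega>. V 0 k \<omega> j * V 0 k' \<omega> i + V 0 k' \<omega> j * V 0 k \<omega> i \<partial>M) / 2"
    by (simp only: mult.commute add.commute)
next
  fix t \<theta> i j
  assume "\<theta> \<in> std_simplex d" "i < D" "j < D"
  then have "v t \<theta> \<omega> i * v t \<theta> \<omega> j = (\<Sum>k<d. \<Sum>k'<d. \<theta> k * \<theta> k' * (V t k \<omega> i * V t k' \<omega> j))"
    if "\<omega> \<in> space M" for \<omega>
    using v_eq that by (simp add: sum_product algebra_simps)
  moreover have integrable_t: "integrable M (\<lambda>\<omega>. V t k \<omega> i * V t k' \<omega> j)"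
    and integral_t: "(\<integral>\<omega>. V t k \<omega> i * V t k' \<omega> j \<partial>M) = (\<integral>\<omega>. V 0 k \<omega> i * V 0 k' \<omega> j \<partial>M)"
    if "k \<in> {..<d}" "k' \<in> {..<d}" for k k'
    using iid_vertex_products[OF M iid, of k k' i j t] integrable_0 that \<open>i < D\<close> \<open>j < D\<close>
    by simp_all
  moreover have "integrable M (\<lambda>\<omega>. \<Sum>k<d. \<Sum>k'<d. \<theta> k * \<theta> k' * (V t k \<omega> i * V t k' \<omega> j))"
    using integrable_t by (intro Bochner_Integration.integrable_sum integrable_mult_right)
  moreover have "(\<integral>\<omega>. (\<Sum>k<d. \<Sum>k'<d. \<theta> k * \<theta> k' * (V t k \<omega> i * V t k' \<omega> j)) \<partial>M)
      = (\<Sum>k<d. \<Sum>k'<d. \<theta> k * \<theta> k' * (\<integral>\<omega>. V 0 k \<omega> i * V 0 k' \<omega> j \<partial>M))"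
    using integrable_t integral_t by (subst integral_sum_sum_mult) auto
  moreover have "(\<integral>\<omega>. V 0 k \<omega> i * V 0 k' \<omega> j + V 0 k' \<omega> i * V 0 k \<omega> j \<partial>M)
      = (\<integral>\<omega>. V 0 k \<omega> i * V 0 k' \<omega> j \<partial>M) + (\<integral>\<omega>. V 0 k' \<omega> i * V 0 k \<omega> j \<partial>M)"
    if "k < d" "k' < d" for k k'
    using integrable_0 \<open>i < D\<close> \<open>j < D\<close> that by simp
  ultimately show "integrable M (\<lambda>\<omega>. v t \<theta> \<omega> i * v t \<theta> \<omega> j) \<and>
      (\<integral>\<omega>. v t \<theta> \<omega> i * v t \<theta> \<omega> j \<partial>M) = (\<Sum>k<d. \<Sum>k'<d. \<theta> k * \<theta> k' *
        ((\<integral>\<omega>. V 0 k \<omega> i * V 0 k' \<omega> j + V 0 k' \<omega> i * V 0 k \<omega> j \<partial>M) / 2))"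
    using sum_sum_symmetrize[of \<theta> "\<lambda>k k'. \<integral>\<omega>. V 0 k \<omega> i * V 0 k' \<omega> j \<partial>M" "{..<d}"]
    by (simp cong: Bochner_Integration.integrable_cong Bochner_Integration.integral_cong)
qed

lemma TI_SMP_with_uncertain_moments:
  fixes v :: "nat \<Rightarrow> (nat \<Rightarrow> real) \<Rightarrow> 'w \<Rightarrow> nat \<Rightarrow> real"
    and \<mu> :: "nat \<Rightarrow> nat \<Rightarrow> real" and \<Sigma> :: "nat \<Rightarrow> nat \<Rightarrow> nat \<Rightarrow> real"
  assumes M: "prob_space M" and "0 < d"
    and \<Sigma>_symmetric: "\<forall>k<d. \<forall>i<D. \<forall>j<D. \<Sigma> k i j = \<Sigma> k j i"
    and integrable: "\<forall>t. \<forall>\<theta>\<in>std_simplex d. \<forall>i<D. \<forall>j<D.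
          integrable M (\<lambda>\<omega>. v t \<theta> \<omega> i) \<and> integrable M (\<lambda>\<omega>. v t \<theta> \<omega> i * v t \<theta> \<omega> j)"
    and mean: "\<forall>t. \<forall>\<theta>\<in>std_simplex d. \<forall>i<D. (\<integral>\<omega>. v t \<theta> \<omega> i \<partial>M) = (\<Sum>k<d. \<theta> k * \<mu> k i)"
    and covariance: "\<forall>t. \<forall>\<theta>\<in>std_simplex d. \<forall>i<D. \<forall>j<D.
          (\<integral>\<omega>. (v t \<theta> \<omega> i - (\<integral>\<omega>'. v t \<theta> \<omega>' i \<partial>M)) * (v t \<theta> \<omega> j - (\<integral>\<omega>'. v t \<theta> \<omega>' j \<partial>M)) \<partial>M)
            = (\<Sum>k<d. \<theta> k * \<Sigma> k i j)"
  shows "TI_SMP_with M D d v (d\<^sup>2) (vec_outer d)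
           (\<lambda>idx i j. (\<mu> (idx mod d) i * \<mu> (idx div d) j + \<mu> (idx div d) i * \<mu> (idx mod d) j) / 2
                      + \<Sigma> (idx mod d) i j)"
proof (rule TI_SMP_with_vec_outerI[where F = "\<lambda>k k' i j. (\<mu> k i * \<mu> k' j + \<mu> k' i * \<mu> k j) / 2 + \<Sigma> k i j"])
  show "0 < d" by fact
next
  fix k k' i j :: nat
  assume "k < d" "i < D" "j < D"
  then show "(\<mu> k i * \<mu> k' j + \<mu> k' i * \<mu> k j) / 2 + \<Sigma> k i j
      = (\<mu> k j * \<mu> k' i + \<mu> k' j * \<mu> k i) / 2 + \<Sigma> k j i"
    using \<Sigma>_symmetric by (simp add: ac_simps)
next
  interpret prob_space M by (rule M)
  fix t \<theta> i j
  assume \<theta>: "\<theta> \<in> std_simplex d" and "i < D" "j < D"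
  then have "(\<integral>\<omega>. v t \<theta> \<omega> i * v t \<theta> \<omega> j \<partial>M)
      = (\<integral>\<omega>. (v t \<theta> \<omega> i - (\<integral>\<omega>'. v t \<theta> \<omega>' i \<partial>M)) * (v t \<theta> \<omega> j - (\<integral>\<omega>'. v t \<theta> \<omega>' j \<partial>M)) \<partial>M)
        + (\<integral>\<omega>. v t \<theta> \<omega> i \<partial>M) * (\<integral>\<omega>. v t \<theta> \<omega> j \<partial>M)"
    using integrable by (intro integral_mult_eq_covariance_add) auto
  also have "\<dots> = (\<Sum>k<d. \<theta> k * \<Sigma> k i j) + (\<Sum>k<d. \<theta> k * \<mu> k i) * (\<Sum>k<d. \<theta> k * \<mu> k j)"
    using mean covariance \<theta> \<open>i < D\<close> \<open>j < D\<close> by simp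
  also have "\<dots> = (\<Sum>k<d. \<Sum>k'<d. \<theta> k * \<theta> k' * \<Sigma> k i j)
      + (\<Sum>k<d. \<Sum>k'<d. \<theta> k * \<theta> k' * (\<mu> k i * \<mu> k' j))"
    using sum_sum_mult_collapse[where A = "{..<d}" and g = "\<lambda>k. \<Sigma> k i j"] \<theta>
    by (simp add: std_simplex_def sum_product algebra_simps)
  also have "\<dots> = (\<Sum>k<d. \<Sum>k'<d. \<theta> k * \<theta> k' * ((\<mu> k i * \<mu> k' j + \<mu> k' i * \<mu> k j) / 2 + \<Sigma> k i j))"
    using sum_sum_symmetrize[of \<theta> "\<lambda>k k'. \<mu> k i * \<mu> k' j" "{..<d}"]
    by (simp add: distrib_left sum.distrib)
  finally show "integrable M (\<lambda>\<omega>. v t \<theta> \<omega> i * v t \<theta> \<omega> j) \<and> (\<integral>\<omega>. v t \<theta> \<omega> i * v t \<theta> \<omega> j \<partial>M)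
      = (\<Sum>k<d. \<Sum>k'<d. \<theta> k * \<theta> k' * ((\<mu> k i * \<mu> k' j + \<mu> k' i * \<mu> k j) / 2 + \<Sigma> k i j))"
    using integrable \<theta> \<open>i < D\<close> \<open>j < D\<close> by simp
qed

lemma TI_SMPI: "TI_SMP_with M D d v N \<phi> Ms \<Longrightarrow> TI_SMP M D d v"
  unfolding TI_SMP_def by blast

theorem theorem10:
  fixes M :: "'w measure" and n m d :: nat
    and A :: "nat \<Rightarrow> (nat \<Rightarrow> real) \<Rightarrow> 'w \<Rightarrow> nat \<Rightarrow> nat \<Rightarrow> real"
    and B :: "nat \<Rightarrow> (nat \<Rightarrow> real) \<Rightarrow> 'w \<Rightarrow> nat \<Rightarrow> nat \<Rightarrow> real"
  defines "D \<equiv> n * (n + m)"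
  defines "v \<equiv> sysvec n m A B"
  assumes M: "prob_space M"
    and d_pos: "0 < d"
    and indep_t: "\<forall>\<theta>\<in>std_simplex d. prob_space.indep_vars M (\<lambda>_. vecM D) (\<lambda>t. rv D (v t \<theta>)) UNIV"
  shows
   \<comment> \<open>(i) v_t i.i.d., independent of theta\<close>
   "(\<forall>w :: nat \<Rightarrow> 'w \<Rightarrow> nat \<Rightarrow> real.
       (\<forall>t. \<forall>\<theta>\<in>std_simplex d. \<forall>\<omega>\<in>space M. \<forall>i<D. v t \<theta> \<omega> i = w t \<omega> i) \<and>
       iid M (vecM D) (\<lambda>t. rv D (w t)) \<and>
       (\<forall>i<D. \<forall>j<D. integrable M (\<lambda>\<omega>. w 0 \<omega> i * w 0 \<omega> j))
     \<longrightarrow> TI_SMP M D d v \<and>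
         TI_SMP_with M D d v 1 (\<lambda>\<theta> k. if k = 0 then 1 else 0)
           (\<lambda>k i j. \<integral>\<omega>. w 0 \<omega> i * w 0 \<omega> j \<partial>M))
   \<and>
   \<comment> \<open>(ii) deterministic polytope\<close>
   (\<forall>vk :: nat \<Rightarrow> nat \<Rightarrow> real.
       (\<forall>t. \<forall>\<theta>\<in>std_simplex d. \<forall>\<omega>\<in>space M. \<forall>i<D. v t \<theta> \<omega> i = (\<Sum>k<d. \<theta> k * vk k i))
     \<longrightarrow> TI_SMP M D d v \<and>
         TI_SMP_with M D d v (d^2) (vec_outer d)
           (\<lambda>idx i j. (vk (idx mod d) i * vk (idx div d) j + vk (idx div d) i * vk (idx mod d) j) / 2))
   \<and>
   \<comment> \<open>(iii) random polytope with i.i.d. random vertices independent of theta\<close>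
   (\<forall>V :: nat \<Rightarrow> nat \<Rightarrow> 'w \<Rightarrow> nat \<Rightarrow> real.
       (\<forall>t. \<forall>\<theta>\<in>std_simplex d. \<forall>\<omega>\<in>space M. \<forall>i<D. v t \<theta> \<omega> i = (\<Sum>k<d. \<theta> k * V t k \<omega> i)) \<and>
       iid M (PiM {..<d} (\<lambda>_. vecM D)) (\<lambda>t \<omega>. restrict (\<lambda>k. rv D (V t k) \<omega>) {..<d}) \<and>
       (\<forall>k<d. \<forall>k'<d. \<forall>i<D. \<forall>j<D. integrable M (\<lambda>\<omega>. V 0 k \<omega> i * V 0 k' \<omega> j))
     \<longrightarrow> TI_SMP M D d v \<and>
         TI_SMP_with M D d v (d^2) (vec_outer d)
           (\<lambda>idx i j. (\<integral>\<omega>. V 0 (idx mod d) \<omega> i * V 0 (idx div d) \<omega> j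
                          + V 0 (idx div d) \<omega> i * V 0 (idx mod d) \<omega> j \<partial>M) / 2))
   \<and>
   \<comment> \<open>(iv) uncertain mean and covariance\<close>
   (\<forall>(\<mu> :: nat \<Rightarrow> nat \<Rightarrow> real) (\<Sigma> :: nat \<Rightarrow> nat \<Rightarrow> nat \<Rightarrow> real).
       (\<forall>k<d. \<forall>i<D. \<forall>j<D. \<Sigma> k i j = \<Sigma> k j i) \<and>
       (\<forall>t. \<forall>\<theta>\<in>std_simplex d. \<forall>i<D. \<forall>j<D.
          integrable M (\<lambda>\<omega>. v t \<theta> \<omega> i) \<and> integrable M (\<lambda>\<omega>. v t \<theta> \<omega> i * v t \<theta> \<omega> j)) \<and>
       (\<forall>t. \<forall>\<theta>\<in>std_simplex d. \<forall>i<D. (\<integral>\<omega>. v t \<theta> \<omega> i \<partial>M) = (\<Sum>k<d. \<theta> k * \<mu> k i)) \<and>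
       (\<forall>t. \<forall>\<theta>\<in>std_simplex d. \<forall>i<D. \<forall>j<D.
          (\<integral>\<omega>. (v t \<theta> \<omega> i - (\<integral>\<omega>'. v t \<theta> \<omega>' i \<partial>M)) * (v t \<theta> \<omega> j - (\<integral>\<omega>'. v t \<theta> \<omega>' j \<partial>M)) \<partial>M)
            = (\<Sum>k<d. \<theta> k * \<Sigma> k i j))
     \<longrightarrow> TI_SMP M D d v \<and>
         TI_SMP_with M D d v (d^2) (vec_outer d)
           (\<lambda>idx i j. (\<mu> (idx mod d) i * \<mu> (idx div d) j + \<mu> (idx div d) i * \<mu> (idx mod d) j) / 2
                      + \<Sigma> (idx mod d) i j))"
  using TI_SMP_with_iid[OF M] TI_SMP_with_deterministic_polytope[OF M d_pos]
    TI_SMP_with_random_polytope[OF M d_pos] TI_SMP_with_uncertain_moments[OF M d_pos]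
  by (intro conjI allI impI; (elim conjE)?) (blast intro: TI_SMPI)+

end
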